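(* Let $P$ be a finite type $\mathbb{N}$-graded upho poset with minimum element $\hat 0$, and suppose $P$ is a meet semilattice. Then $\mu(\hat 0,p)=0$ for all but finitely many $p\in P$; consequently $\chi_P(x)$ is a polynomial, and $F_P(x)=1/\chi_P(x)$ is the reciprocal of a polynomial. More precisely, $\chi_P(x)=\sum_{p\in P'}\mu(\hat0,p)x^{\rho(p)}$, where $P'$ is the finite subposet of $P$ consisting of all elements lying below some join (least upper bound) of a finite set of atoms of $P$, and $P'$ is a finite graded meet semilattice.
   Context: A poset $P$ is $\mathbb{N}$-graded if $P = P_0\sqcup P_1\sqcup P_2\sqcup\cdots$ (disjoint union) such that every maximal chain has the form $p_0\lessdot p_1\lessdot p_2\lessdot\cdots$ with $p_i\in P_i$ for all $i$. Its rank function $\rho\colon P\to\mathbb{N}$ is $\rho(p)=i$ for $p\in P_i$. $P$ has finite type if $\#P_i<\infty$ for all $i$. The rank generating function is $F_P(x)=\sum_{p\in P}x^{\rho(p)}$, and with $\mu$ the Möbius function of $P$, the characteristic generating function is $\chi_P(x)=\sum_{p\in P}\mu(\hat 0,p)x^{\rho(p)}$. $P$ is upper homogeneous (upho) if for every $p\in P$ the principal order filter $V_p=\{q\in P: q\ge p\}$ is isomorphic to $P$. Atoms are the elements covering $\hat 0$ (there are finitely many, by finite type). A meet semilattice is a poset in which every pair of elements has a greatest lower bound. *)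

theory Defs
  imports "HOL-Computational_Algebra.Polynomial_FPS"
begin

(* All posets are subsets P of a type 'a carrying the (partial) order of class order,
   with the induced order. *)

definition covers :: "'a::order set \<Rightarrow> 'a \<Rightarrow> 'a \<Rightarrow> bool" where
  "covers P x y \<longleftrightarrow> x \<in> P \<and> y \<in> P \<and> x < y \<and> \<not> (\<exists>z\<in>P. x < z \<and> z < y)"

definition maximal_chain :: "'a::order set \<Rightarrow> 'a set \<Rightarrow> bool" where
  "maximal_chain P C \<longleftrightarrow> C \<subseteq> P \<and> Complete_Partial_Order.chain (\<le>) C \<and>
     (\<forall>D. D \<subseteq> P \<and> Complete_Partial_Order.chain (\<le>) D \<and> C \<subseteq> D \<longrightarrow> D = C)"

definition graded :: "'a::order set \<Rightarrow> ('a \<Rightarrow> nat) \<Rightarrow> bool" where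
  "graded P rho \<longleftrightarrow>
     (\<forall>C. maximal_chain P C \<longrightarrow>
        (\<exists>(f::nat \<Rightarrow> 'a) (N::nat set). (N = UNIV \<or> (\<exists>n. N = {..<n})) \<and> C = f ` N \<and>
           (\<forall>i. Suc i \<in> N \<longrightarrow> covers P (f i) (f (Suc i))) \<and>
           (\<forall>i\<in>N. rho (f i) = i)))"

definition finite_type :: "'a set \<Rightarrow> ('a \<Rightarrow> nat) \<Rightarrow> bool" where
  "finite_type P rho \<longleftrightarrow> (\<forall>i. finite {p\<in>P. rho p = i})"

definition is_minimum :: "'a::order set \<Rightarrow> 'a \<Rightarrow> bool" where
  "is_minimum P z \<longleftrightarrow> z \<in> P \<and> (\<forall>p\<in>P. z \<le> p)"

definition upho :: "'a::order set \<Rightarrow> bool" where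
  "upho P \<longleftrightarrow> (\<forall>p\<in>P. \<exists>f. bij_betw f P {q\<in>P. p \<le> q} \<and>
                      (\<forall>x\<in>P. \<forall>y\<in>P. x \<le> y \<longleftrightarrow> f x \<le> f y))"

definition is_glb :: "'a::order set \<Rightarrow> 'a \<Rightarrow> 'a \<Rightarrow> 'a \<Rightarrow> bool" where
  "is_glb P x y m \<longleftrightarrow> m \<in> P \<and> m \<le> x \<and> m \<le> y \<and> (\<forall>w\<in>P. w \<le> x \<and> w \<le> y \<longrightarrow> w \<le> m)"

definition meet_semilattice :: "'a::order set \<Rightarrow> bool" where
  "meet_semilattice P \<longleftrightarrow> (\<forall>x\<in>P. \<forall>y\<in>P. \<exists>m. is_glb P x y m)"

definition is_lub :: "'a::order set \<Rightarrow> 'a set \<Rightarrow> 'a \<Rightarrow> bool" where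
  "is_lub P S j \<longleftrightarrow> j \<in> P \<and> (\<forall>s\<in>S. s \<le> j) \<and> (\<forall>w\<in>P. (\<forall>s\<in>S. s \<le> w) \<longrightarrow> j \<le> w)"

definition atoms :: "'a::order set \<Rightarrow> 'a \<Rightarrow> 'a set" where
  "atoms P z = {a. covers P z a}"

definition mobius_fun :: "'a::order set \<Rightarrow> ('a \<Rightarrow> 'a \<Rightarrow> int) \<Rightarrow> bool" where
  "mobius_fun P m \<longleftrightarrow>
     (\<forall>x y. m x y = (if x \<in> P \<and> y \<in> P then
                       (if x = y then 1
                        else if x < y then - (\<Sum>w\<in>{w\<in>P. x \<le> w \<and> w < y}. m x w)
                        else 0)
                     else 0))"

definition mobius :: "'a::order set \<Rightarrow> 'a \<Rightarrow> 'a \<Rightarrow> int" where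
  "mobius P = (THE m. mobius_fun P m)"

definition rank_gf :: "'a set \<Rightarrow> ('a \<Rightarrow> nat) \<Rightarrow> int fps" where
  "rank_gf P rho = Abs_fps (\<lambda>n. int (card {p\<in>P. rho p = n}))"

definition char_gf :: "'a::order set \<Rightarrow> ('a \<Rightarrow> nat) \<Rightarrow> 'a \<Rightarrow> int fps" where
  "char_gf P rho z = Abs_fps (\<lambda>n. \<Sum>p\<in>{p\<in>P. rho p = n}. mobius P z p)"

end

theory Submission
  imports Defs
begin

(*
  Since P is upho, there are as many elements of rank rho p + k above p as elements of rank k.
  Hence the n-th coefficient of F_P * chi_P is the sum, over the q of rank n, of the sums of
  mu(0,p) over p <= q; by the recursion defining mu this is 1 for n = 0 and 0 otherwise.

  In a meet semilattice of finite type, every set of atoms below w has a join, which lies below w.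
  Let c(w) be the sum of (-1)^|S| over the sets S of atoms with join w. The sum of c over the
  elements below w is the alternating sum over all subsets of the atoms below w, which vanishes
  unless w is the bottom; so c satisfies the recursion of mu(0,-) and equals it (Rota's crosscut
  theorem). Thus mu(0,p) vanishes unless p is the join of a set of atoms. As there are finitely
  many atoms, chi_P is a polynomial supported on the finite down-set P', which inherits
  gradedness and meets from P.
*)

section \<open>Chains, joins and meets\<close>

lemma downward_closed_nat_set_cases:
  fixes N :: "nat set"
  assumes "\<And>i j. i \<in> N \<Longrightarrow> j < i \<Longrightarrow> j \<in> N"
  shows "N = UNIV \<or> (\<exists>n. N = {..<n})"
proof (cases "N = UNIV")
  case False
  then obtain k where "k \<notin> N" by auto
  define n where "n = (LEAST k. k \<notin> N)"
  have n: "n \<notin> N" unfolding n_def by (rule LeastI, fact)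
  have "N = {..<n}"
  proof
    show "N \<subseteq> {..<n}" using assms n by (metis lessThan_iff linorder_neqE_nat subsetI)
    show "{..<n} \<subseteq> N" unfolding n_def using not_less_Least by auto
  qed
  then show ?thesis by auto
qed auto

lemma sum_Pow_minus_one_power_card:
  assumes "finite A" "A \<noteq> {}"
  shows "(\<Sum>S\<in>Pow A. (-1) ^ card S) = (0::'b::comm_ring_1)"
proof -
  have "card A > 0" using assms by (simp add: card_gt_0_iff)
  then show ?thesis using prod_diff_conv_sum[OF assms(1), of "\<lambda>_. 1" "\<lambda>_. 1"] by (simp add: zero_power)
qed

lemma maximal_chain_extend:
  fixes P :: "'a::order set"
  assumes "C \<subseteq> P" "Complete_Partial_Order.chain (\<le>) C"
  shows "\<exists>M. maximal_chain P M \<and> C \<subseteq> M"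
proof -
  define A where "A = {D. D \<subseteq> P \<and> Complete_Partial_Order.chain (\<le>) D \<and> C \<subseteq> D}"
  have "\<exists>M\<in>A. \<forall>X\<in>A. M \<subseteq> X \<longrightarrow> X = M"
  proof (rule subset_Zorn_nonempty)
    show "A \<noteq> {}" using assms unfolding A_def by blast
  next
    fix \<C> assume \<C>: "\<C> \<noteq> {}" "subset.chain A \<C>"
    then have "\<C> \<subseteq> A" and comparable: "\<And>X Y. X \<in> \<C> \<Longrightarrow> Y \<in> \<C> \<Longrightarrow> X \<subseteq> Y \<or> Y \<subseteq> X"
      unfolding subset_chain_def by blast+
    have "Complete_Partial_Order.chain (\<le>) (\<Union>\<C>)"
    proof (rule chainI)
      fix x y assume "x \<in> \<Union>\<C>" "y \<in> \<Union>\<C>"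
      then obtain X Y where XY: "X \<in> \<C>" "Y \<in> \<C>" "x \<in> X" "y \<in> Y" by blast
      have "Complete_Partial_Order.chain (\<le>) (X \<union> Y)"
        using comparable[OF XY(1,2)] XY(1,2) \<open>\<C> \<subseteq> A\<close> unfolding A_def
        by (cases "X \<subseteq> Y") (auto simp: sup.absorb1 sup.absorb2)
      moreover have "x \<in> X \<union> Y" "y \<in> X \<union> Y" using XY by auto
      ultimately show "x \<le> y \<or> y \<le> x" by (rule chainD)
    qed
    then show "\<Union>\<C> \<in> A" using \<C>(1) \<open>\<C> \<subseteq> A\<close> unfolding A_def by blast
  qed
  then obtain M where M: "M \<in> A" and max: "\<And>X. X \<in> A \<Longrightarrow> M \<subseteq> X \<Longrightarrow> X = M" by blast
  have "maximal_chain P M"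
    unfolding maximal_chain_def
  proof (intro conjI allI impI)
    show "M \<subseteq> P" "Complete_Partial_Order.chain (\<le>) M" using M unfolding A_def by auto
    fix D assume "D \<subseteq> P \<and> Complete_Partial_Order.chain (\<le>) D \<and> M \<subseteq> D"
    then show "D = M" using max M unfolding A_def by blast
  qed
  then show ?thesis using M unfolding A_def by blast
qed

definition rank_enum :: "'a::order set \<Rightarrow> ('a \<Rightarrow> nat) \<Rightarrow> (nat \<Rightarrow> 'a) \<Rightarrow> nat set \<Rightarrow> bool" where
  "rank_enum P rho f N \<longleftrightarrow> (N = UNIV \<or> (\<exists>n. N = {..<n})) \<and>
     (\<forall>i. Suc i \<in> N \<longrightarrow> covers P (f i) (f (Suc i))) \<and> (\<forall>i\<in>N. rho (f i) = i)"

lemma graded_iff_rank_enum: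
  "graded P rho \<longleftrightarrow> (\<forall>C. maximal_chain P C \<longrightarrow> (\<exists>f N. C = f ` N \<and> rank_enum P rho f N))"
  unfolding graded_def rank_enum_def by (simp only: conj_left_commute)

lemma rank_enum_downward: "rank_enum P rho f N \<Longrightarrow> j \<in> N \<Longrightarrow> i \<le> j \<Longrightarrow> i \<in> N"
  unfolding rank_enum_def by auto

lemma rank_enum_covers: "rank_enum P rho f N \<Longrightarrow> Suc i \<in> N \<Longrightarrow> covers P (f i) (f (Suc i))"
  unfolding rank_enum_def by blast

lemma rank_enum_rank: "rank_enum P rho f N \<Longrightarrow> i \<in> N \<Longrightarrow> rho (f i) = i"
  unfolding rank_enum_def by blast

lemma rank_enum_strict_mono:
  assumes enum: "rank_enum P rho f N"
  shows "i < j \<Longrightarrow> j \<in> N \<Longrightarrow> f i < f j"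
proof (induction j)
  case (Suc j)
  have step: "f j < f (Suc j)" using rank_enum_covers[OF enum Suc.prems(2)] unfolding covers_def by blast
  show ?case
  proof (cases "i = j")
    case False
    then have "f i < f j" using Suc rank_enum_downward[OF enum] by simp
    then show ?thesis using step by (rule order.strict_trans)
  qed (use step in simp)
qed simp

lemma graded_downward_closed:
  fixes P :: "'a::order set"
  assumes graded: "graded P rho" and QP: "Q \<subseteq> P"
    and down: "\<And>q x. q \<in> Q \<Longrightarrow> x \<in> P \<Longrightarrow> x \<le> q \<Longrightarrow> x \<in> Q"
  shows "graded Q rho"
  unfolding graded_iff_rank_enum
proof (intro allI impI)
  fix C assume "maximal_chain Q C"
  then have CQ: "C \<subseteq> Q" and Cc: "Complete_Partial_Order.chain (\<le>) C"
    and Cmax: "\<And>D. D \<subseteq> Q \<Longrightarrow> Complete_Partial_Order.chain (\<le>) D \<Longrightarrow> C \<subseteq> D \<Longrightarrow> D = C"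
    unfolding maximal_chain_def by blast+
  obtain M where M: "maximal_chain P M" "C \<subseteq> M"
    using maximal_chain_extend[OF order.trans[OF CQ QP] Cc] by blast
  then obtain f N where MN: "M = f ` N" and enum: "rank_enum P rho f N"
    using graded unfolding graded_iff_rank_enum by blast
  have "Complete_Partial_Order.chain (\<le>) (M \<inter> Q)"
    using M(1) unfolding maximal_chain_def by (blast intro: chain_subset)
  then have CM: "C = M \<inter> Q" using Cmax M(2) CQ by blast
  define N' where "N' = {i\<in>N. f i \<in> Q}"
  have downN': "j \<in> N'" if "i \<in> N'" "j < i" for i j
  proof -
    have "i \<in> N" "f i \<in> Q" "j \<in> N" using that rank_enum_downward[OF enum] unfolding N'_def by auto
    moreover have "f j < f i" using rank_enum_strict_mono[OF enum] that(2) \<open>i \<in> N\<close> .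
    moreover have "f j \<in> P" using M(1) MN \<open>j \<in> N\<close> unfolding maximal_chain_def by blast
    ultimately show ?thesis using down unfolding N'_def by auto
  qed
  have "rank_enum Q rho f N'"
    unfolding rank_enum_def
  proof (intro conjI allI impI ballI)
    show "N' = UNIV \<or> (\<exists>n. N' = {..<n})" using downN' by (rule downward_closed_nat_set_cases)
    fix i
    show "i \<in> N' \<Longrightarrow> rho (f i) = i" using rank_enum_rank[OF enum] unfolding N'_def by simp
    assume i: "Suc i \<in> N'"
    then have "f i \<in> Q" "f (Suc i) \<in> Q" "Suc i \<in> N" using downN'[OF i] unfolding N'_def by auto
    then show "covers Q (f i) (f (Suc i))"
      using rank_enum_covers[OF enum] QP unfolding covers_def by blast
  qed
  moreover have "C = f ` N'" unfolding CM MN N'_def by auto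
  ultimately show "\<exists>f N. C = f ` N \<and> rank_enum Q rho f N" by blast
qed

lemma meet_semilattice_downward_closed:
  fixes P :: "'a::order set"
  assumes "meet_semilattice P" "Q \<subseteq> P"
    and down: "\<And>q x. q \<in> Q \<Longrightarrow> x \<in> P \<Longrightarrow> x \<le> q \<Longrightarrow> x \<in> Q"
  shows "meet_semilattice Q"
  unfolding meet_semilattice_def
proof (intro ballI)
  fix x y assume "x \<in> Q" "y \<in> Q"
  then obtain m where m: "is_glb P x y m" using assms(1,2) unfolding meet_semilattice_def by blast
  then have "m \<in> Q" using down \<open>x \<in> Q\<close> unfolding is_glb_def by blast
  then show "\<exists>m. is_glb Q x y m" using m assms(2) unfolding is_glb_def by blast
qed

lemma is_lub_unique: "is_lub P S j \<Longrightarrow> is_lub P S j' \<Longrightarrow> j = j'"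
  unfolding is_lub_def by (meson order.antisym)

lemma meet_semilattice_lub_below:
  fixes P :: "'a::order set"
  assumes meet: "meet_semilattice P" and w: "w \<in> P" and S: "S \<subseteq> P" "\<forall>s\<in>S. s \<le> w"
    and fin: "finite {u\<in>P. u \<le> w}"
  shows "\<exists>j. is_lub P S j \<and> j \<le> w"
proof -
  define U where "U = {u\<in>P. u \<le> w \<and> (\<forall>s\<in>S. s \<le> u)}"
  have glb_in_U: "m \<in> U" if u: "u \<in> P" "\<forall>s\<in>S. s \<le> u" and v: "v \<in> U"
    and m: "is_glb P u v m" for u v m
  proof -
    have "m \<in> P" "m \<le> v" and greatest: "\<And>x. x \<in> P \<Longrightarrow> x \<le> u \<Longrightarrow> x \<le> v \<Longrightarrow> x \<le> m"
      using m unfolding is_glb_def by auto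
    moreover have "m \<le> w" using \<open>m \<le> v\<close> v unfolding U_def by auto
    moreover have "\<forall>s\<in>S. s \<le> m" using greatest S(1) u(2) v unfolding U_def by blast
    ultimately show ?thesis unfolding U_def by blast
  qed
  have "finite U" unfolding U_def by (rule finite_subset[OF _ fin]) auto
  moreover have "w \<in> U" unfolding U_def using w S by auto
  ultimately obtain j where j: "j \<in> U" and j_min: "\<And>v. v \<in> U \<Longrightarrow> v \<le> j \<Longrightarrow> j = v"
    using finite_has_minimal[of U] by blast
  have least: "j \<le> u" if u: "u \<in> P" "\<forall>s\<in>S. s \<le> u" for u
  proof -
    \<comment> \<open>the meet of u and w lies in U, and so does its meet with j, which by minimality is j\<close>
    obtain m where m: "is_glb P u w m" using meet u(1) w unfolding meet_semilattice_def by blast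
    have "m \<in> U" by (rule glb_in_U[OF u \<open>w \<in> U\<close> m])
    then have "m \<in> P" "\<forall>s\<in>S. s \<le> m" unfolding U_def by auto
    obtain m' where m': "is_glb P m j m'" using meet \<open>m \<in> P\<close> j unfolding meet_semilattice_def U_def by blast
    have "m' \<in> U" by (rule glb_in_U[OF \<open>m \<in> P\<close> \<open>\<forall>s\<in>S. s \<le> m\<close> j m'])
    moreover have "m' \<le> j" "m' \<le> m" "m \<le> u" using m m' unfolding is_glb_def by auto
    ultimately have "j \<le> m" using j_min by fastforce
    then show ?thesis using \<open>m \<le> u\<close> by (rule order.trans)
  qed
  have "is_lub P S j" using j least unfolding is_lub_def U_def by blast
  then show ?thesis using j unfolding U_def by blast
qed

definition filter_iso :: "'a::order set \<Rightarrow> 'a \<Rightarrow> ('a \<Rightarrow> 'a) \<Rightarrow> bool" where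
  "filter_iso P p f \<longleftrightarrow> bij_betw f P {q\<in>P. p \<le> q} \<and> (\<forall>x\<in>P. \<forall>y\<in>P. x \<le> y \<longleftrightarrow> f x \<le> f y)"

lemma upho_filter_iso: "upho P \<Longrightarrow> p \<in> P \<Longrightarrow> \<exists>f. filter_iso P p f"
  unfolding upho_def filter_iso_def by blast

lemma filter_iso_image: "filter_iso P p f \<Longrightarrow> f ` P = {q\<in>P. p \<le> q}"
  unfolding filter_iso_def bij_betw_def by blast

lemma filter_iso_le_iff: "filter_iso P p f \<Longrightarrow> x \<in> P \<Longrightarrow> y \<in> P \<Longrightarrow> f x \<le> f y \<longleftrightarrow> x \<le> y"
  unfolding filter_iso_def by blast

lemma filter_iso_less_iff: "filter_iso P p f \<Longrightarrow> x \<in> P \<Longrightarrow> y \<in> P \<Longrightarrow> f x < f y \<longleftrightarrow> x < y"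
  using filter_iso_le_iff[of P p f] by (auto simp: less_le_not_le)

lemma filter_iso_covers:
  assumes iso: "filter_iso P p f" and ab: "covers P a b"
  shows "covers P (f a) (f b)"
proof -
  have a: "a \<in> P" and b: "b \<in> P" and "a < b" using ab unfolding covers_def by auto
  then have "f a \<in> P" "p \<le> f a" "f b \<in> P" "f a < f b"
    using filter_iso_image[OF iso] filter_iso_less_iff[OF iso a b] by auto
  moreover have "\<not> (f a < w \<and> w < f b)" if "w \<in> P" for w
  proof
    assume w: "f a < w \<and> w < f b"
    then have "w \<in> f ` P" using filter_iso_image[OF iso] \<open>p \<le> f a\<close> that by auto
    then obtain u where "u \<in> P" "w = f u" by blast
    then have "a < u" "u < b" using w filter_iso_less_iff[OF iso] a b by auto
    then show False using ab \<open>u \<in> P\<close> unfolding covers_def by blast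
  qed
  ultimately show ?thesis unfolding covers_def by blast
qed

section \<open>Graded posets with a bottom element\<close>

locale graded_bottom_poset =
  fixes P :: "'a::order set" and rho :: "'a \<Rightarrow> nat" and z :: 'a
  assumes graded: "graded P rho" and finite_type: "finite_type P rho"
    and minimum: "is_minimum P z"
begin

lemma bottom_in: "z \<in> P" and bottom_le: "p \<in> P \<Longrightarrow> z \<le> p"
  using minimum unfolding is_minimum_def by auto

lemma saturated_chain_through:
  assumes "x \<in> P" "y \<in> P" "x \<le> y"
  obtains f N where "rank_enum P rho f N" "f ` N \<subseteq> P"
    "rho x \<in> N" "rho y \<in> N" "f (rho x) = x" "f (rho y) = y"
proof -
  have "Complete_Partial_Order.chain (\<le>) {x, y}"
    using assms(3) by (auto intro: chainI)
  moreover have "{x, y} \<subseteq> P" using assms(1,2) by simp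
  ultimately obtain M where M: "maximal_chain P M" "{x, y} \<subseteq> M"
    using maximal_chain_extend by blast
  obtain f N where MN: "M = f ` N" and enum: "rank_enum P rho f N"
    using graded M(1) unfolding graded_iff_rank_enum by blast
  obtain i j where i: "i \<in> N" "x = f i" and j: "j \<in> N" "y = f j" using M(2) MN by blast
  show ?thesis
  proof (rule that[OF enum])
    show "f ` N \<subseteq> P" using M(1) MN unfolding maximal_chain_def by blast
    show "rho x \<in> N" "rho y \<in> N" "f (rho x) = x" "f (rho y) = y"
      using i j rank_enum_rank[OF enum] by simp_all
  qed
qed

lemma rank_strict_mono:
  assumes "x \<in> P" "y \<in> P" "x < y"
  shows "rho x < rho y"
proof -
  obtain f N where enum: "rank_enum P rho f N" "f ` N \<subseteq> P"
    and x: "rho x \<in> N" and y: "rho y \<in> N" and fx: "f (rho x) = x" and fy: "f (rho y) = y"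
    by (rule saturated_chain_through[OF assms(1,2) less_imp_le[OF assms(3)]])
  show ?thesis
  proof (rule ccontr)
    assume "\<not> rho x < rho y"
    then consider "rho y < rho x" | "rho y = rho x" by linarith
    then show False
    proof cases
      case 1
      then have "y < x" using rank_enum_strict_mono[OF enum(1) 1 x] fx fy by simp
      then show False using assms(3) by simp
    next
      case 2
      then have "x = y" by (metis fx fy)
      then show False using assms(3) by simp
    qed
  qed
qed

lemma rank_mono: "x \<in> P \<Longrightarrow> y \<in> P \<Longrightarrow> x \<le> y \<Longrightarrow> rho x \<le> rho y"
  using rank_strict_mono[of x y] by (cases "x = y") (auto simp: order_less_le)

lemma rank_bottom: "rho z = 0"
proof (rule ccontr)
  assume "rho z \<noteq> 0"
  obtain f N where enum: "rank_enum P rho f N" "f ` N \<subseteq> P"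
    and z: "rho z \<in> N" "rho z \<in> N" "f (rho z) = z" "f (rho z) = z"
    by (rule saturated_chain_through[OF bottom_in bottom_in order_refl])
  have "f 0 < z" using rank_enum_strict_mono[OF enum(1) _ z(1)] z(3) \<open>rho z \<noteq> 0\<close> by force
  moreover have "f 0 \<in> P" using enum rank_enum_downward[OF enum(1) z(1)] by blast
  ultimately show False using bottom_le by (meson leD)
qed

lemma rank_covers:
  assumes "covers P a b"
  shows "rho b = Suc (rho a)"
proof (rule ccontr)
  have ab: "a \<in> P" "b \<in> P" "a < b" using assms unfolding covers_def by auto
  obtain f N where enum: "rank_enum P rho f N" "f ` N \<subseteq> P"
    and a: "rho a \<in> N" and b: "rho b \<in> N" and fa: "f (rho a) = a" and fb: "f (rho b) = b"
    by (rule saturated_chain_through[OF ab(1,2) less_imp_le[OF ab(3)]])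
  assume "rho b \<noteq> Suc (rho a)"
  then have between: "Suc (rho a) < rho b" using rank_strict_mono[OF ab] by linarith
  then have "Suc (rho a) \<in> N" using rank_enum_downward[OF enum(1) b] by simp
  then have "a < f (Suc (rho a))" "f (Suc (rho a)) \<in> P"
    using rank_enum_strict_mono[OF enum(1), of "rho a"] fa enum(2) by auto
  moreover have "f (Suc (rho a)) < b" using rank_enum_strict_mono[OF enum(1) between b] fb by simp
  ultimately show False using assms unfolding covers_def by blast
qed

lemma exists_covered:
  assumes "q \<in> P" "z < q"
  shows "\<exists>q'. covers P q' q"
proof -
  obtain f N where enum: "rank_enum P rho f N" "f ` N \<subseteq> P"
    and "rho z \<in> N" and q: "rho q \<in> N" and "f (rho z) = z" and fq: "f (rho q) = q"
    by (rule saturated_chain_through[OF bottom_in assms(1) less_imp_le[OF assms(2)]])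
  obtain k where k: "rho q = Suc k"
    using rank_strict_mono[OF bottom_in assms] rank_bottom gr0_conv_Suc by auto
  have "covers P (f k) (f (Suc k))" using rank_enum_covers[OF enum(1)] q k by simp
  then show ?thesis using fq k by auto
qed

lemma atom_below:
  assumes "w \<in> P" "z < w"
  shows "\<exists>a\<in>atoms P z. a \<le> w"
proof -
  obtain f N where enum: "rank_enum P rho f N" "f ` N \<subseteq> P"
    and "rho z \<in> N" and w: "rho w \<in> N" and z: "f (rho z) = z" and fw: "f (rho w) = w"
    by (rule saturated_chain_through[OF bottom_in assms(1) less_imp_le[OF assms(2)]])
  have pos: "Suc 0 \<le> rho w" using rank_strict_mono[OF bottom_in assms] rank_bottom by simp
  then have "Suc 0 \<in> N" using rank_enum_downward[OF enum(1) w] by simp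
  then have "covers P z (f (Suc 0))" using rank_enum_covers[OF enum(1)] z rank_bottom by force
  moreover have "f (Suc 0) \<le> w"
  proof (cases "rho w = Suc 0")
    case False
    then have "f (Suc 0) < f (rho w)" using rank_enum_strict_mono[OF enum(1) _ w] pos by simp
    then show ?thesis using fw by simp
  qed (use fw in simp)
  ultimately show ?thesis unfolding atoms_def by auto
qed

lemma finite_rank_level: "finite {w\<in>P. rho w = n}"
  using finite_type unfolding finite_type_def by auto

lemma finite_rank_le: "finite {w\<in>P. rho w \<le> n}"
proof -
  have "{w\<in>P. rho w \<le> n} = (\<Union>i\<in>{..n}. {w\<in>P. rho w = i})" by auto
  then show ?thesis using finite_rank_level by auto
qed

lemma finite_below: "y \<in> P \<Longrightarrow> finite {w\<in>P. w \<le> y}"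
  by (rule finite_subset[OF _ finite_rank_le[of "rho y"]]) (auto intro: rank_mono)

lemma finite_interval: "y \<in> P \<Longrightarrow> finite {w\<in>P. x \<le> w \<and> w < y}"
  by (rule finite_subset[OF _ finite_below[of y]]) auto

lemma atom_in: "a \<in> atoms P z \<Longrightarrow> a \<in> P" and atom_gt: "a \<in> atoms P z \<Longrightarrow> z < a"
  unfolding atoms_def covers_def by auto

lemma finite_atoms: "finite (atoms P z)"
proof (rule finite_subset[OF _ finite_rank_level[of 1]])
  show "atoms P z \<subseteq> {w\<in>P. rho w = 1}"
    using rank_covers rank_bottom atom_in unfolding atoms_def by fastforce
qed

end

section \<open>The M\<ouml>bius function\<close>

(* The recursion of mobius_fun cut off at depth n; it is exact once n \<ge> rho y. *)
primrec mobius_trunc :: "'a::order set \<Rightarrow> nat \<Rightarrow> 'a \<Rightarrow> 'a \<Rightarrow> int" where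
  "mobius_trunc P 0 x y = (if x \<in> P \<and> y \<in> P \<and> x = y then 1 else 0)"
| "mobius_trunc P (Suc n) x y = (if x \<in> P \<and> y \<in> P then (if x = y then 1 else if x < y then
      - (\<Sum>w\<in>{w\<in>P. x \<le> w \<and> w < y}. mobius_trunc P n x w) else 0) else 0)"

context graded_bottom_poset
begin

lemma mobius_trunc_stable:
  "rho y \<le> n \<Longrightarrow> rho y \<le> n' \<Longrightarrow> mobius_trunc P n x y = mobius_trunc P n' x y"
proof (induction n arbitrary: n' y)
  case 0
  show ?case
  proof (cases n')
    case (Suc k)
    have "\<not> (x \<in> P \<and> y \<in> P \<and> x < y)" using rank_strict_mono 0 by fastforce
    then show ?thesis using Suc by auto
  qed simp
next
  case (Suc n)
  show ?case
  proof (cases n')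
    case 0
    have "\<not> (x \<in> P \<and> y \<in> P \<and> x < y)" using rank_strict_mono Suc.prems 0 by fastforce
    then show ?thesis using 0 by auto
  next
    case (Suc k)
    have "(\<Sum>w\<in>{w\<in>P. x \<le> w \<and> w < y}. mobius_trunc P n x w)
        = (\<Sum>w\<in>{w\<in>P. x \<le> w \<and> w < y}. mobius_trunc P k x w)" if "y \<in> P"
    proof (rule sum.cong[OF refl])
      fix w assume "w \<in> {w\<in>P. x \<le> w \<and> w < y}"
      then have "rho w < rho y" using rank_strict_mono that by auto
      then show "mobius_trunc P n x w = mobius_trunc P k x w" using Suc.IH Suc.prems \<open>n' = Suc k\<close> by auto
    qed
    then show ?thesis using Suc by auto
  qed
qed

lemma mobius_fun_mobius_trunc: "mobius_fun P (\<lambda>x y. mobius_trunc P (rho y) x y)"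
  unfolding mobius_fun_def
proof (intro allI)
  fix x y
  show "mobius_trunc P (rho y) x y = (if x \<in> P \<and> y \<in> P then (if x = y then 1
        else if x < y then - (\<Sum>w\<in>{w\<in>P. x \<le> w \<and> w < y}. mobius_trunc P (rho w) x w) else 0) else 0)"
  proof (cases "x \<in> P \<and> y \<in> P \<and> x < y")
    case True
    then obtain k where k: "rho y = Suc k" using rank_strict_mono[of x y] by (cases "rho y") auto
    have "(\<Sum>w\<in>{w\<in>P. x \<le> w \<and> w < y}. mobius_trunc P k x w)
        = (\<Sum>w\<in>{w\<in>P. x \<le> w \<and> w < y}. mobius_trunc P (rho w) x w)"
    proof (rule sum.cong[OF refl])
      fix w assume "w \<in> {w\<in>P. x \<le> w \<and> w < y}"
      then have "rho w < rho y" using rank_strict_mono True by auto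
      then show "mobius_trunc P k x w = mobius_trunc P (rho w) x w" using mobius_trunc_stable k by auto
    qed
    then show ?thesis using True k by auto
  next
    case False
    then show ?thesis by (cases "rho y") auto
  qed
qed

lemma mobius_fun_unique:
  assumes "mobius_fun P m1" "mobius_fun P m2"
  shows "m1 = m2"
proof (intro ext)
  fix x y
  note rec1 = assms(1)[unfolded mobius_fun_def, rule_format]
  note rec2 = assms(2)[unfolded mobius_fun_def, rule_format]
  show "m1 x y = m2 x y"
  proof (induction "rho y" arbitrary: y rule: less_induct)
    case less
    show ?case
    proof (cases "x \<in> P \<and> y \<in> P \<and> x < y")
      case True
      have "(\<Sum>w\<in>{w\<in>P. x \<le> w \<and> w < y}. m1 x w) = (\<Sum>w\<in>{w\<in>P. x \<le> w \<and> w < y}. m2 x w)"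
      proof (rule sum.cong[OF refl])
        fix w assume "w \<in> {w\<in>P. x \<le> w \<and> w < y}"
        then have "rho w < rho y" using rank_strict_mono True by auto
        then show "m1 x w = m2 x w" using less by auto
      qed
      then show ?thesis using True rec1[of x y] rec2[of x y] by simp
    next
      case False
      then show ?thesis using rec1[of x y] rec2[of x y] by auto
    qed
  qed
qed

lemma mobius_fun_mobius: "mobius_fun P (mobius P)"
  unfolding mobius_def
  by (rule theI[where P = "mobius_fun P", OF mobius_fun_mobius_trunc])
    (rule mobius_fun_unique[symmetric], rule mobius_fun_mobius_trunc)

lemma mobius_rec: "mobius P x y = (if x \<in> P \<and> y \<in> P then (if x = y then 1
    else if x < y then - (\<Sum>w\<in>{w\<in>P. x \<le> w \<and> w < y}. mobius P x w) else 0) else 0)"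
  using mobius_fun_mobius[unfolded mobius_fun_def, rule_format, of x y] .

lemma mobius_nonzero_imp_in: "mobius P z p \<noteq> 0 \<Longrightarrow> p \<in> P"
  using mobius_rec[of z p] by (auto split: if_splits)

lemma sum_mobius_below:
  assumes "q \<in> P"
  shows "(\<Sum>p\<in>{p\<in>P. p \<le> q}. mobius P z p) = (if q = z then 1 else 0)"
proof (cases "q = z")
  case True
  then have "{p\<in>P. p \<le> q} = {z}" using bottom_le bottom_in by fastforce
  then show ?thesis using True mobius_rec[of z z] bottom_in by simp
next
  case False
  then have "z < q" using bottom_le[OF assms] by (auto simp: order_less_le)
  have split: "{p\<in>P. p \<le> q} = insert q {w\<in>P. z \<le> w \<and> w < q}" using assms bottom_le by auto
  have "(\<Sum>p\<in>{p\<in>P. p \<le> q}. mobius P z p)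
      = mobius P z q + (\<Sum>w\<in>{w\<in>P. z \<le> w \<and> w < q}. mobius P z w)"
    unfolding split by (rule sum.insert) (use finite_interval[OF assms] in auto)
  also have "\<dots> = 0" using mobius_rec[of z q] \<open>z < q\<close> bottom_in assms by simp
  finally show ?thesis using False by simp
qed

end

section \<open>Upper homogeneity\<close>

context graded_bottom_poset
begin

lemma filter_iso_bottom:
  assumes iso: "filter_iso P p f" and p: "p \<in> P"
  shows "f z = p"
proof -
  obtain u where u: "u \<in> P" "p = f u" using filter_iso_image[OF iso] p by blast
  have "f z \<le> p" using filter_iso_le_iff[OF iso bottom_in u(1)] bottom_le[OF u(1)] u(2) by simp
  moreover have "p \<le> f z" using filter_iso_image[OF iso] bottom_in by blast
  ultimately show ?thesis by simp
qed

lemma filter_iso_rank: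
  assumes iso: "filter_iso P p f" and p: "p \<in> P"
  shows "q \<in> P \<Longrightarrow> rho (f q) = rho p + rho q"
proof (induction "rho q" arbitrary: q rule: less_induct)
  case less
  show ?case
  proof (cases "q = z")
    case True
    then show ?thesis using filter_iso_bottom[OF iso p] rank_bottom by simp
  next
    case False
    then have "z < q" using bottom_le[OF less.prems] by (simp add: order_less_le)
    then obtain q' where q': "covers P q' q" using exists_covered less.prems by blast
    then have "q' \<in> P" and rank_q: "rho q = Suc (rho q')" using rank_covers unfolding covers_def by auto
    then have "rho (f q') = rho p + rho q'" using less.hyps by simp
    moreover have "rho (f q) = Suc (rho (f q'))" using rank_covers[OF filter_iso_covers[OF iso q']] .
    ultimately show ?thesis using rank_q by simp
  qed
qed

lemma card_rank_level_shift:
  assumes "upho P" and p: "p \<in> P"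
  shows "card {q\<in>P. rho q = k} = card {q\<in>P. p \<le> q \<and> rho q = rho p + k}"
proof -
  obtain f where iso: "filter_iso P p f" using upho_filter_iso assms by blast
  have "inj_on f P" using iso unfolding filter_iso_def bij_betw_def by simp
  then have inj: "inj_on f {q\<in>P. rho q = k}" by (rule inj_on_subset) blast
  have "f ` {q\<in>P. rho q = k} = {q\<in>P. p \<le> q \<and> rho q = rho p + k}"
  proof (intro equalityI subsetI)
    fix q assume "q \<in> f ` {q\<in>P. rho q = k}"
    then obtain u where u: "u \<in> P" "rho u = k" "q = f u" by blast
    then have "q \<in> f ` P" by blast
    then show "q \<in> {q\<in>P. p \<le> q \<and> rho q = rho p + k}"
      using filter_iso_image[OF iso] filter_iso_rank[OF iso p u(1)] u by simp
  next
    fix q assume q: "q \<in> {q\<in>P. p \<le> q \<and> rho q = rho p + k}"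
    then have "q \<in> f ` P" using filter_iso_image[OF iso] by simp
    then obtain u where u: "u \<in> P" "q = f u" by blast
    then have "rho u = k" using q filter_iso_rank[OF iso p u(1)] by simp
    then show "q \<in> f ` {q\<in>P. rho q = k}" using u by blast
  qed
  then show ?thesis using card_image[OF inj] by simp
qed

lemma sum_mobius_times_count_above:
  "(\<Sum>p\<in>{p\<in>P. rho p \<le> n}. mobius P z p * int (card {q\<in>P. rho q = n \<and> p \<le> q}))
    = (if n = 0 then 1 else 0)"
proof -
  let ?Q = "{p\<in>P. rho p \<le> n}" and ?L = "{q\<in>P. rho q = n}"
  have "(\<Sum>p\<in>?Q. mobius P z p * int (card {q\<in>P. rho q = n \<and> p \<le> q}))
      = (\<Sum>p\<in>?Q. \<Sum>q\<in>{q\<in>?L. p \<le> q}. mobius P z p)"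
  proof (rule sum.cong[OF refl])
    fix p
    have "{q\<in>P. rho q = n \<and> p \<le> q} = {q\<in>?L. p \<le> q}" by auto
    then show "mobius P z p * int (card {q\<in>P. rho q = n \<and> p \<le> q})
        = (\<Sum>q\<in>{q\<in>?L. p \<le> q}. mobius P z p)" by simp
  qed
  also have "\<dots> = (\<Sum>q\<in>?L. \<Sum>p\<in>{p\<in>?Q. p \<le> q}. mobius P z p)"
    by (rule sum.swap_restrict[OF finite_rank_le finite_rank_level])
  also have "\<dots> = (\<Sum>q\<in>?L. if q = z then 1 else 0)"
  proof (rule sum.cong[OF refl])
    fix q assume q: "q \<in> ?L"
    then have "{p\<in>?Q. p \<le> q} = {p\<in>P. p \<le> q}" using rank_mono by auto
    then show "(\<Sum>p\<in>{p\<in>?Q. p \<le> q}. mobius P z p) = (if q = z then 1 else 0)"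
      using sum_mobius_below q by auto
  qed
  also have "\<dots> = (if n = 0 then 1 else 0)"
    using finite_rank_level bottom_in rank_bottom by auto
  finally show ?thesis .
qed

lemma rank_gf_mult_char_gf:
  assumes "upho P"
  shows "rank_gf P rho * char_gf P rho z = 1"
proof (rule fps_ext)
  fix n
  let ?count = "\<lambda>p. int (card {q\<in>P. rho q = n \<and> p \<le> q})"
  have "fps_nth (rank_gf P rho * char_gf P rho z) n
      = (\<Sum>i=0..n. (\<Sum>p\<in>{p\<in>P. rho p = i}. mobius P z p) * int (card {q\<in>P. rho q = n - i}))"
    by (subst mult.commute) (simp add: fps_mult_nth char_gf_def rank_gf_def)
  also have "\<dots> = (\<Sum>i\<in>{0..n}. \<Sum>p\<in>{p. p \<in> {p\<in>P. rho p \<le> n} \<and> rho p = i}. mobius P z p * ?count p)"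
  proof (rule sum.cong[OF refl])
    fix i assume i: "i \<in> {0..n}"
    then have level: "{p. p \<in> {p\<in>P. rho p \<le> n} \<and> rho p = i} = {p\<in>P. rho p = i}" by auto
    have "card {q\<in>P. rho q = n - i} = card {q\<in>P. rho q = n \<and> p \<le> q}" if "p \<in> {p\<in>P. rho p = i}" for p
    proof -
      have "card {q\<in>P. rho q = n - i} = card {q\<in>P. p \<le> q \<and> rho q = rho p + (n - i)}"
        using card_rank_level_shift[OF assms] that by auto
      also have "{q\<in>P. p \<le> q \<and> rho q = rho p + (n - i)} = {q\<in>P. rho q = n \<and> p \<le> q}"
        using that i by auto
      finally show ?thesis .
    qed
    then show "(\<Sum>p\<in>{p\<in>P. rho p = i}. mobius P z p) * int (card {q\<in>P. rho q = n - i})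
        = (\<Sum>p\<in>{p. p \<in> {p\<in>P. rho p \<le> n} \<and> rho p = i}. mobius P z p * ?count p)"
      unfolding level sum_distrib_right by simp
  qed
  also have "\<dots> = (\<Sum>p\<in>{p\<in>P. rho p \<le> n}. mobius P z p * ?count p)"
    by (rule sum.group[OF finite_rank_le]) auto
  also have "\<dots> = fps_nth 1 n"
    using sum_mobius_times_count_above by simp
  finally show "fps_nth (rank_gf P rho * char_gf P rho z) n = fps_nth 1 n" .
qed

end

section \<open>Meet semilattices and the crosscut of atoms\<close>

locale graded_meet_semilattice = graded_bottom_poset +
  assumes meet: "meet_semilattice P"
begin

definition crosscut_sum :: "'a \<Rightarrow> int" where
  "crosscut_sum w = (\<Sum>S\<in>{S\<in>Pow (atoms P z). is_lub P S w}. (-1) ^ card S)"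

lemma sum_crosscut_sum_below:
  assumes w: "w \<in> P"
  shows "(\<Sum>v\<in>{v\<in>P. v \<le> w}. crosscut_sum v) = (\<Sum>S\<in>Pow {a\<in>atoms P z. a \<le> w}. (-1) ^ card S)"
proof -
  have "(\<Sum>v\<in>{v\<in>P. v \<le> w}. crosscut_sum v)
      = (\<Sum>S\<in>Pow (atoms P z). \<Sum>v\<in>{v\<in>{v\<in>P. v \<le> w}. is_lub P S v}. (-1) ^ card S)"
    unfolding crosscut_sum_def by (rule sum.swap_restrict) (use finite_below[OF w] finite_atoms in auto)
  also have "\<dots> = (\<Sum>S\<in>Pow (atoms P z). if S \<subseteq> {a\<in>atoms P z. a \<le> w} then (-1) ^ card S else 0)"
  proof (rule sum.cong[OF refl])
    fix S assume "S \<in> Pow (atoms P z)"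
    show "(\<Sum>v\<in>{v\<in>{v\<in>P. v \<le> w}. is_lub P S v}. (-1) ^ card S)
        = (if S \<subseteq> {a\<in>atoms P z. a \<le> w} then (-1) ^ card S else 0)"
    proof (cases "S \<subseteq> {a\<in>atoms P z. a \<le> w}")
      case True
      then obtain j where j: "is_lub P S j" "j \<le> w"
        using meet_semilattice_lub_below[OF meet w _ _ finite_below[OF w]] atom_in by blast
      then have lubs: "{v\<in>{v\<in>P. v \<le> w}. is_lub P S v} = {j}"
        using is_lub_unique unfolding is_lub_def by blast
      show ?thesis unfolding lubs using True by simp
    next
      case False
      then have lubs: "{v\<in>{v\<in>P. v \<le> w}. is_lub P S v} = {}"
        using \<open>S \<in> Pow (atoms P z)\<close> unfolding is_lub_def by (auto intro: order.trans)
      show ?thesis unfolding lubs using False by simp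
    qed
  qed
  also have "\<dots> = (\<Sum>S\<in>{S\<in>Pow (atoms P z). S \<subseteq> {a\<in>atoms P z. a \<le> w}}. (-1) ^ card S)"
    by (rule sum.inter_filter[symmetric]) (use finite_atoms in auto)
  also have "{S\<in>Pow (atoms P z). S \<subseteq> {a\<in>atoms P z. a \<le> w}} = Pow {a\<in>atoms P z. a \<le> w}" by auto
  finally show ?thesis .
qed

lemma mobius_eq_crosscut_sum: "w \<in> P \<Longrightarrow> mobius P z w = crosscut_sum w"
proof (induction "rho w" arbitrary: w rule: less_induct)
  case less
  show ?case
  proof (cases "w = z")
    case True
    have "{S\<in>Pow (atoms P z). is_lub P S z} = {{}}"
    proof -
      have "is_lub P {} z" using bottom_in bottom_le unfolding is_lub_def by auto
      moreover have "S = {}" if "S \<subseteq> atoms P z" "is_lub P S z" for S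
      proof (rule ccontr)
        assume "S \<noteq> {}"
        then obtain s where "s \<in> S" by blast
        then have "z < s" "s \<le> z" using that atom_gt unfolding is_lub_def by auto
        then show False by simp
      qed
      ultimately show ?thesis by auto
    qed
    then show ?thesis using True mobius_rec[of z z] bottom_in unfolding crosscut_sum_def by simp
  next
    case False
    then have "z < w" using bottom_le[OF less.prems] by (auto simp: order_less_le)
    have split: "{v\<in>P. v \<le> w} = insert w {v\<in>P. z \<le> v \<and> v < w}" using less.prems bottom_le by auto
    have "finite {a\<in>atoms P z. a \<le> w}" using finite_atoms by simp
    moreover have "{a\<in>atoms P z. a \<le> w} \<noteq> {}" using atom_below[OF less.prems \<open>z < w\<close>] by auto
    ultimately have "(\<Sum>v\<in>{v\<in>P. v \<le> w}. crosscut_sum v) = 0"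
      unfolding sum_crosscut_sum_below[OF less.prems] by (rule sum_Pow_minus_one_power_card)
    moreover have "(\<Sum>v\<in>{v\<in>P. v \<le> w}. crosscut_sum v)
        = crosscut_sum w + (\<Sum>v\<in>{v\<in>P. z \<le> v \<and> v < w}. crosscut_sum v)"
      unfolding split by (rule sum.insert) (use finite_interval less.prems in auto)
    moreover have "(\<Sum>v\<in>{v\<in>P. z \<le> v \<and> v < w}. crosscut_sum v)
        = (\<Sum>v\<in>{v\<in>P. z \<le> v \<and> v < w}. mobius P z v)"
    proof (rule sum.cong[OF refl])
      fix v assume "v \<in> {v\<in>P. z \<le> v \<and> v < w}"
      then have "v \<in> P" "rho v < rho w" using rank_strict_mono[OF _ less.prems] by auto
      then show "crosscut_sum v = mobius P z v" using less.hyps by simp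
    qed
    ultimately show ?thesis using mobius_rec[of z w] \<open>z < w\<close> bottom_in less.prems by simp
  qed
qed

definition atom_lub_ideal :: "'a set" where
  "atom_lub_ideal = {q\<in>P. \<exists>S j. S \<subseteq> atoms P z \<and> finite S \<and> is_lub P S j \<and> q \<le> j}"

lemma atom_lub_ideal_subset: "atom_lub_ideal \<subseteq> P"
  unfolding atom_lub_ideal_def by auto

lemma atom_lub_ideal_downward: "q \<in> atom_lub_ideal \<Longrightarrow> x \<in> P \<Longrightarrow> x \<le> q \<Longrightarrow> x \<in> atom_lub_ideal"
  unfolding atom_lub_ideal_def by (auto intro: order.trans)

lemma mobius_support_subset_atom_lub_ideal:
  assumes "mobius P z p \<noteq> 0"
  shows "p \<in> atom_lub_ideal"
proof -
  have p: "p \<in> P" using mobius_nonzero_imp_in assms .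
  then have "crosscut_sum p \<noteq> 0" using mobius_eq_crosscut_sum assms by simp
  then obtain S where "S \<subseteq> atoms P z" "is_lub P S p"
    unfolding crosscut_sum_def by (metis (no_types, lifting) PowD mem_Collect_eq sum.neutral)
  then show ?thesis using p finite_subset[OF _ finite_atoms] unfolding atom_lub_ideal_def by blast
qed

lemma finite_atom_lub_ideal: "finite atom_lub_ideal"
proof -
  have "atom_lub_ideal \<subseteq> (\<Union>S\<in>Pow (atoms P z). {q\<in>P. \<exists>j. is_lub P S j \<and> q \<le> j})"
    unfolding atom_lub_ideal_def by blast
  moreover have "finite {q\<in>P. \<exists>j. is_lub P S j \<and> q \<le> j}" for S
  proof (cases "\<exists>j. is_lub P S j")
    case True
    then obtain j where j: "is_lub P S j" by blast
    then have "{q\<in>P. \<exists>j. is_lub P S j \<and> q \<le> j} = {q\<in>P. q \<le> j}" using is_lub_unique by blast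
    then show ?thesis using finite_below j unfolding is_lub_def by simp
  qed simp
  ultimately show ?thesis using finite_atoms by (simp add: finite_subset)
qed

lemma char_gf_eq_poly:
  "char_gf P rho z = fps_of_poly (\<Sum>p\<in>atom_lub_ideal. monom (mobius P z p) (rho p))"
proof (rule fps_ext)
  fix n
  have "fps_nth (fps_of_poly (\<Sum>p\<in>atom_lub_ideal. monom (mobius P z p) (rho p))) n
      = (\<Sum>p\<in>atom_lub_ideal. if rho p = n then mobius P z p else 0)"
    by (simp add: coeff_sum)
  also have "\<dots> = (\<Sum>p\<in>{p\<in>atom_lub_ideal. rho p = n}. mobius P z p)"
    by (rule sum.inter_filter[symmetric, OF finite_atom_lub_ideal])
  also have "\<dots> = (\<Sum>p\<in>{p\<in>P. rho p = n}. mobius P z p)"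
    by (rule sum.mono_neutral_left[OF finite_rank_level])
      (use atom_lub_ideal_subset mobius_support_subset_atom_lub_ideal in auto)
  finally show "fps_nth (char_gf P rho z) n
      = fps_nth (fps_of_poly (\<Sum>p\<in>atom_lub_ideal. monom (mobius P z p) (rho p))) n"
    unfolding char_gf_def by simp
qed

end

theorem mainTheorem4:
  fixes P :: "'a::order set" and rho :: "'a \<Rightarrow> nat" and z :: 'a
  assumes "graded P rho" and "finite_type P rho" and "upho P"
    and "is_minimum P z" and "meet_semilattice P"
  defines "P' \<equiv> {q\<in>P. \<exists>S j. S \<subseteq> atoms P z \<and> finite S \<and> is_lub P S j \<and> q \<le> j}"
  shows "finite {p\<in>P. mobius P z p \<noteq> 0}
    \<and> (\<exists>q :: int poly. char_gf P rho z = fps_of_poly q)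
    \<and> rank_gf P rho * char_gf P rho z = 1
    \<and> char_gf P rho z = fps_of_poly (\<Sum>p\<in>P'. monom (mobius P z p) (rho p))
    \<and> finite P' \<and> (\<exists>rho'. graded P' rho') \<and> meet_semilattice P'"
proof -
  interpret graded_meet_semilattice P rho z
    using assms(1,2,4,5) by unfold_locales
  have P': "P' = atom_lub_ideal" unfolding P'_def atom_lub_ideal_def ..
  have "{p\<in>P. mobius P z p \<noteq> 0} \<subseteq> atom_lub_ideal"
    using mobius_support_subset_atom_lub_ideal by blast
  then have "finite {p\<in>P. mobius P z p \<noteq> 0}" using finite_atom_lub_ideal by (rule finite_subset)
  moreover have "graded atom_lub_ideal rho"
    using graded_downward_closed[OF graded atom_lub_ideal_subset atom_lub_ideal_downward] .
  moreover have "meet_semilattice atom_lub_ideal"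
    using meet_semilattice_downward_closed[OF meet atom_lub_ideal_subset atom_lub_ideal_downward] .
  ultimately show ?thesis
    unfolding P' using char_gf_eq_poly finite_atom_lub_ideal rank_gf_mult_char_gf[OF assms(3)] by auto
qed

end
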